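(* Let $P_k\ge 1$, $\mu>0$, $\beta>0$, $s_k>0$ and $\nu=(\nu_1,\dots,\nu_{P_k})^\top\in\mathbb{R}^{P_k}$. Consider $$\min_{x\in\mathbb{R}^{P_k},\ x\ge 0}\ \ -U_k\Big(\sum_{i=1}^{P_k}x_i\Big)+\frac{\mu}{2}\|x-\nu\|_2^2 .$$ Then this problem has a unique minimizer $x^\star$, given by $x^\star_i=\max(0,\nu_i+\zeta)$ for all $i$, where $\zeta$ is the unique positive number such that $\sum_{i}\max(0,\nu_i+\zeta)>0$ and $$\mu\zeta=U_k'\Big(\sum_{i=1}^{P_k}\max(0,\nu_i+\zeta)\Big).$$ Moreover, suppose (after relabeling) $\nu_1\ge\nu_2\ge\dots\ge\nu_{P_k}$, and use the convention $U_k'(0)=+\infty$. If there is a smallest index $i'\in\{2,\dots,P_k\}$ such that $\zeta_0:=-\nu_{i'}>0$ and $\mu\zeta_0\ge U_k'\big(\sum_{i=1}^{P_k}\max(0,\nu_i+\zeta_0)\big)$, then $\zeta$ is the largest real root of the cubic equation $$\mu\zeta\Big(\sum_{i=1}^{i'-1}(\nu_i+\zeta)\Big)^2=\beta\sum_{i=1}^{i'-1}(\nu_i+\zeta)+s_k ;$$ otherwise $\zeta$ is the largest real root of the cubic equation $$\mu\zeta\Big(\sum_{i=1}^{P_k}(\nu_i+\zeta)\Big)^2=\beta\sum_{i=1}^{P_k}(\nu_i+\zeta)+s_k .$$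
   Context: $U_k(u)=\beta\log u-\frac{s_k}{u}$ for $u>0$ (so $U_k'(u)=\frac{\beta}{u}+\frac{s_k}{u^2}$), and $-U_k(0)$ is taken to be $+\infty$, so that the objective equals $+\infty$ at $x=0$. *)

theory Defs
  imports Complex_Main "HOL-Library.Extended_Real"
begin

definition U :: "real \<Rightarrow> real \<Rightarrow> real \<Rightarrow> real" where
  "U \<beta> s u = \<beta> * ln u - s / u"

definition dU :: "real \<Rightarrow> real \<Rightarrow> real \<Rightarrow> ereal" where
  "dU \<beta> s u = (if u = 0 then \<infinity> else ereal (\<beta> / u + s / u\<^sup>2))"

text \<open>Vectors of R^{P_k} are encoded as functions nat => real, supported on {1..n}.\<close>
definition feasible :: "nat \<Rightarrow> (nat \<Rightarrow> real) \<Rightarrow> bool" where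
  "feasible n x \<longleftrightarrow> (\<forall>i\<in>{1..n}. 0 \<le> x i) \<and> (\<forall>i. i \<notin> {1..n} \<longrightarrow> x i = 0)"

definition obj :: "real \<Rightarrow> real \<Rightarrow> real \<Rightarrow> nat \<Rightarrow> (nat \<Rightarrow> real) \<Rightarrow> (nat \<Rightarrow> real) \<Rightarrow> ereal" where
  "obj \<beta> s \<mu> n \<nu> x =
     (if (\<Sum>i=1..n. x i) = 0 then \<infinity>
      else ereal (- U \<beta> s (\<Sum>i=1..n. x i) + \<mu> / 2 * (\<Sum>i=1..n. (x i - \<nu> i)\<^sup>2)))"

definition is_minimizer :: "real \<Rightarrow> real \<Rightarrow> real \<Rightarrow> nat \<Rightarrow> (nat \<Rightarrow> real) \<Rightarrow> (nat \<Rightarrow> real) \<Rightarrow> bool" where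
  "is_minimizer \<beta> s \<mu> n \<nu> x \<longleftrightarrow>
     feasible n x \<and> (\<forall>y. feasible n y \<longrightarrow> obj \<beta> s \<mu> n \<nu> x \<le> obj \<beta> s \<mu> n \<nu> y)"

definition Ssum :: "nat \<Rightarrow> (nat \<Rightarrow> real) \<Rightarrow> real \<Rightarrow> real" where
  "Ssum n \<nu> z = (\<Sum>i=1..n. max 0 (\<nu> i + z))"

definition cubic_root :: "real \<Rightarrow> real \<Rightarrow> real \<Rightarrow> (nat \<Rightarrow> real) \<Rightarrow> nat \<Rightarrow> real \<Rightarrow> bool" where
  "cubic_root \<beta> s \<mu> \<nu> m z \<longleftrightarrow>
     \<mu> * z * (\<Sum>i=1..m. \<nu> i + z)\<^sup>2 = \<beta> * (\<Sum>i=1..m. \<nu> i + z) + s"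

definition largest_cubic_root :: "real \<Rightarrow> real \<Rightarrow> real \<Rightarrow> (nat \<Rightarrow> real) \<Rightarrow> nat \<Rightarrow> real \<Rightarrow> bool" where
  "largest_cubic_root \<beta> s \<mu> \<nu> m z \<longleftrightarrow>
     cubic_root \<beta> s \<mu> \<nu> m z \<and> (\<forall>w. cubic_root \<beta> s \<mu> \<nu> m w \<longrightarrow> w \<le> z)"

definition idx_cond :: "real \<Rightarrow> real \<Rightarrow> real \<Rightarrow> nat \<Rightarrow> (nat \<Rightarrow> real) \<Rightarrow> nat \<Rightarrow> bool" where
  "idx_cond \<beta> s \<mu> n \<nu> i \<longleftrightarrow>
     - \<nu> i > 0 \<and> ereal (\<mu> * (- \<nu> i)) \<ge> dU \<beta> s (Ssum n \<nu> (- \<nu> i))"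

end

theory Submission imports Defs begin

text \<open>The objective is strictly convex and, for \<open>\<zeta> > 0\<close>, the first-order optimality
condition reads \<open>x = max 0 (\<nu> + \<zeta>)\<close> with \<open>\<mu> \<zeta> = U'(\<Sigma> x)\<close>. Since \<open>\<mu> \<zeta>\<close> increases and
\<open>U'(Ssum \<zeta>)\<close> decreases in \<open>\<zeta>\<close>, this equation has exactly one positive solution, which
exists by the intermediate value theorem. Concavity of \<open>U\<close> and the projection inequality
for \<open>max 0\<close> then give \<open>obj y \<ge> obj x + \<mu>/2 \<parallel>y - x\<parallel>\<^sup>2\<close>, hence minimality and uniqueness.
For sorted \<open>\<nu>\<close> the coordinates with \<open>\<nu>\<^sub>i + \<zeta> < 0\<close> form a suffix, and each of them
satisfies \<open>idx_cond\<close>; so the active set is a prefix determined by the least such index, and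
clearing denominators turns the stationarity equation into the cubic, whose positive-sum
root is the largest one because the cubic grows on that side.\<close>

definition waterfill :: "nat \<Rightarrow> (nat \<Rightarrow> real) \<Rightarrow> real \<Rightarrow> nat \<Rightarrow> real" where
  "waterfill n \<nu> z = (\<lambda>i. if i \<in> {1..n} then max 0 (\<nu> i + z) else 0)"

definition stationary :: "real \<Rightarrow> real \<Rightarrow> real \<Rightarrow> nat \<Rightarrow> (nat \<Rightarrow> real) \<Rightarrow> real \<Rightarrow> bool" where
  "stationary \<beta> s \<mu> n \<nu> z \<longleftrightarrow>
     0 < z \<and> 0 < Ssum n \<nu> z \<and> \<mu> * z = \<beta> / Ssum n \<nu> z + s / (Ssum n \<nu> z)\<^sup>2"

lemma Ssum_nonneg: "0 \<le> Ssum n \<nu> z"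
  unfolding Ssum_def by (intro sum_nonneg) simp

lemma Ssum_mono: "z \<le> w \<Longrightarrow> Ssum n \<nu> z \<le> Ssum n \<nu> w"
  unfolding Ssum_def by (intro sum_mono) simp

lemma sum_waterfill: "(\<Sum>i=1..n. waterfill n \<nu> z i) = Ssum n \<nu> z"
  unfolding waterfill_def Ssum_def by (intro sum.cong) auto

lemma feasible_waterfill: "feasible n (waterfill n \<nu> z)"
  unfolding feasible_def waterfill_def by auto

lemma dU_pos: "0 < u \<Longrightarrow> dU \<beta> s u = ereal (\<beta> / u + s / u\<^sup>2)"
  unfolding dU_def by simp

lemma stationary_iff_dU:
  "stationary \<beta> s \<mu> n \<nu> z \<longleftrightarrow>
     0 < z \<and> 0 < Ssum n \<nu> z \<and> ereal (\<mu> * z) = dU \<beta> s (Ssum n \<nu> z)"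
  unfolding stationary_def using dU_pos by auto

lemma marginal_antimono:
  fixes u v \<beta> s :: real
  assumes "0 < u" "u \<le> v" "0 < \<beta>" "0 < s"
  shows "\<beta> / v + s / v\<^sup>2 \<le> \<beta> / u + s / u\<^sup>2"
proof -
  have "\<beta> / v \<le> \<beta> / u" using assms by (intro divide_left_mono) auto
  moreover have "s / v\<^sup>2 \<le> s / u\<^sup>2"
    using assms by (intro divide_left_mono power_mono) auto
  ultimately show ?thesis by simp
qed

lemma neg_U_tangent:
  fixes u v \<beta> s :: real
  assumes "0 < u" "0 < v" "0 < \<beta>" "0 < s"
  shows "- U \<beta> s u - (\<beta> / u + s / u\<^sup>2) * (v - u) \<le> - U \<beta> s v"
proof -
  have "ln (v / u) \<le> v / u - 1" using assms by (intro ln_le_minus_one) auto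
  hence "ln v - ln u \<le> (v - u) / u" using assms by (simp add: ln_div diff_divide_distrib)
  hence log_part: "\<beta> * (ln v - ln u) \<le> \<beta> * ((v - u) / u)"
    using assms by (intro mult_left_mono) auto
  have "1 / v - 1 / u + (v - u) / u\<^sup>2 = (v - u)\<^sup>2 / (u\<^sup>2 * v)"
    using assms by (simp add: field_simps power2_eq_square)
  also have "\<dots> \<ge> 0" using assms by simp
  finally have "0 \<le> s * (1 / v - 1 / u + (v - u) / u\<^sup>2)" using assms by simp
  hence "0 \<le> s / v - s / u + s * (v - u) / u\<^sup>2" by (simp add: algebra_simps)
  with log_part show ?thesis unfolding U_def by (simp add: algebra_simps)
qed

text \<open>The variational inequality of the projection onto \<open>[0, \<infinity>)\<close>: the shift
\<open>max 0 (v + z) - v\<close> equals \<open>z\<close> when the coordinate is active and is \<open>\<ge> z\<close> otherwise.\<close>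
lemma sq_dist_clip_lower_bound:
  fixes y v z :: real
  assumes "0 \<le> y" "0 < z"
  shows "(max 0 (v + z) - v)\<^sup>2 + 2 * z * (y - max 0 (v + z)) + (y - max 0 (v + z))\<^sup>2
           \<le> (y - v)\<^sup>2"
proof (cases "0 \<le> v + z")
  case True
  thus ?thesis by (simp add: max_def power2_eq_square algebra_simps)
next
  case False
  have "z * y \<le> (- v) * y" using False assms by (intro mult_right_mono) auto
  with False show ?thesis by (simp add: power2_eq_square algebra_simps)
qed

lemma obj_waterfill:
  assumes "stationary \<beta> s \<mu> n \<nu> z"
  shows "obj \<beta> s \<mu> n \<nu> (waterfill n \<nu> z) =
    ereal (- U \<beta> s (Ssum n \<nu> z) + \<mu> / 2 * (\<Sum>i=1..n. (waterfill n \<nu> z i - \<nu> i)\<^sup>2))"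
  using assms unfolding obj_def stationary_def sum_waterfill by simp

lemma obj_ge_waterfill_plus_sq_dist:
  assumes "0 < \<mu>" "0 < \<beta>" "0 < s" and st: "stationary \<beta> s \<mu> n \<nu> z"
    and "feasible n y"
  shows "obj \<beta> s \<mu> n \<nu> (waterfill n \<nu> z)
           + ereal (\<mu> / 2 * (\<Sum>i=1..n. (y i - waterfill n \<nu> z i)\<^sup>2))
         \<le> obj \<beta> s \<mu> n \<nu> y"
proof (cases "(\<Sum>i=1..n. y i) = 0")
  case True
  thus ?thesis unfolding obj_def[of _ _ _ _ _ y] by simp
next
  case False
  define x where "x = waterfill n \<nu> z"
  let ?S = "Ssum n \<nu> z" and ?Y = "\<Sum>i=1..n. y i"
  have y_nonneg: "\<forall>i\<in>{1..n}. 0 \<le> y i" using \<open>feasible n y\<close> unfolding feasible_def by auto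
  hence "0 < ?Y" using False sum_nonneg[of "{1..n}" y] by fastforce
  have z: "0 < z" "0 < ?S" "\<mu> * z = \<beta> / ?S + s / ?S\<^sup>2" using st unfolding stationary_def by auto
  have "(\<Sum>i=1..n. (x i - \<nu> i)\<^sup>2 + 2 * z * (y i - x i) + (y i - x i)\<^sup>2)
          \<le> (\<Sum>i=1..n. (y i - \<nu> i)\<^sup>2)"
    using y_nonneg z(1) unfolding x_def waterfill_def
    by (intro sum_mono) (simp add: sq_dist_clip_lower_bound)
  moreover have "(\<Sum>i=1..n. 2 * z * (y i - x i)) = 2 * z * (?Y - ?S)"
    unfolding x_def sum_waterfill[symmetric]
    by (simp add: sum_distrib_left[symmetric] sum_subtractf)
  ultimately have quad: "(\<Sum>i=1..n. (x i - \<nu> i)\<^sup>2) + 2 * z * (?Y - ?S)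
      + (\<Sum>i=1..n. (y i - x i)\<^sup>2) \<le> (\<Sum>i=1..n. (y i - \<nu> i)\<^sup>2)"
    by (simp add: sum.distrib)
  have tangent: "- U \<beta> s ?S - \<mu> * z * (?Y - ?S) \<le> - U \<beta> s ?Y"
    using neg_U_tangent[of ?S ?Y \<beta> s] assms z \<open>0 < ?Y\<close> by simp
  have "\<mu> / 2 * ((\<Sum>i=1..n. (x i - \<nu> i)\<^sup>2) + 2 * z * (?Y - ?S) + (\<Sum>i=1..n. (y i - x i)\<^sup>2))
          \<le> \<mu> / 2 * (\<Sum>i=1..n. (y i - \<nu> i)\<^sup>2)"
    using quad assms(1) by (intro mult_left_mono) auto
  with tangent have "- U \<beta> s ?S + \<mu> / 2 * (\<Sum>i=1..n. (x i - \<nu> i)\<^sup>2)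
      + \<mu> / 2 * (\<Sum>i=1..n. (y i - x i)\<^sup>2) \<le> - U \<beta> s ?Y + \<mu> / 2 * (\<Sum>i=1..n. (y i - \<nu> i)\<^sup>2)"
    by (simp add: algebra_simps)
  with False show ?thesis
    unfolding obj_waterfill[OF st] obj_def[of _ _ _ _ _ y] x_def by simp
qed

lemma is_minimizer_iff_waterfill:
  assumes "0 < \<mu>" "0 < \<beta>" "0 < s" and st: "stationary \<beta> s \<mu> n \<nu> z"
  shows "is_minimizer \<beta> s \<mu> n \<nu> x \<longleftrightarrow> x = waterfill n \<nu> z"
proof
  assume "x = waterfill n \<nu> z"
  moreover have "obj \<beta> s \<mu> n \<nu> (waterfill n \<nu> z) \<le> obj \<beta> s \<mu> n \<nu> y" if "feasible n y" for y
  proof -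
    have "0 \<le> \<mu> / 2 * (\<Sum>i=1..n. (y i - waterfill n \<nu> z i)\<^sup>2)"
      using assms(1) by (intro mult_nonneg_nonneg sum_nonneg) auto
    thus ?thesis using obj_ge_waterfill_plus_sq_dist[OF assms that] obj_waterfill[OF st]
      by (smt (verit) ereal_less_eq(3) plus_ereal.simps(1) order_trans)
  qed
  ultimately show "is_minimizer \<beta> s \<mu> n \<nu> x"
    unfolding is_minimizer_def using feasible_waterfill by auto
next
  assume "is_minimizer \<beta> s \<mu> n \<nu> x"
  hence x: "feasible n x" "obj \<beta> s \<mu> n \<nu> x \<le> obj \<beta> s \<mu> n \<nu> (waterfill n \<nu> z)"
    unfolding is_minimizer_def using feasible_waterfill by auto
  have "\<mu> / 2 * (\<Sum>i=1..n. (x i - waterfill n \<nu> z i)\<^sup>2) \<le> 0"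
    using order_trans[OF obj_ge_waterfill_plus_sq_dist[OF assms x(1)] x(2)]
    unfolding obj_waterfill[OF st] by simp
  hence "(\<Sum>i=1..n. (x i - waterfill n \<nu> z i)\<^sup>2) = 0"
    using assms(1) sum_nonneg[of "{1..n}" "\<lambda>i. (x i - waterfill n \<nu> z i)\<^sup>2"]
    by (simp add: mult_le_0_iff)
  hence "\<forall>i\<in>{1..n}. x i = waterfill n \<nu> z i" by (subst (asm) sum_nonneg_eq_0_iff) auto
  with x(1) show "x = waterfill n \<nu> z"
    unfolding feasible_def by (intro ext) (auto simp: waterfill_def)
qed

lemma stationary_exists:
  assumes "1 \<le> n" "0 < \<mu>" "0 < \<beta>" "0 < s"
  shows "\<exists>z. stationary \<beta> s \<mu> n \<nu> z"
proof -
  define S where "S = Ssum n \<nu>"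
  define f where "f z = \<mu> * z * (S z)\<^sup>2 - \<beta> * S z - s" for z
  \<comment> \<open>large enough that \<open>S b \<ge> 1\<close> and \<open>\<mu> b \<ge> \<beta> + s\<close>, which makes \<open>f b \<ge> 0\<close>\<close>
  define b where "b = 1 + \<bar>\<nu> 1\<bar> + (\<beta> + s) / \<mu>"
  have "0 \<le> b" unfolding b_def using assms by simp
  have "continuous_on {0..b} f" unfolding f_def S_def Ssum_def by (intro continuous_intros)
  have "0 \<le> \<beta> * S 0" using Ssum_nonneg[of n \<nu> 0] assms by (simp add: S_def)
  hence "f 0 \<le> 0" using assms by (simp add: f_def)
  have "0 \<le> f b"
  proof -
    have "max 0 (\<nu> 1 + b) \<le> S b"
      unfolding S_def Ssum_def using assms(1) by (intro member_le_sum) auto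
    moreover have "1 \<le> \<nu> 1 + b"
      unfolding b_def using assms by (smt (verit) abs_ge_minus_self divide_pos_pos)
    ultimately have S1: "1 \<le> S b" by simp
    hence sq: "S b \<le> (S b)\<^sup>2" "1 \<le> (S b)\<^sup>2"
      by (auto simp: power2_eq_square intro: order_trans[OF _ mult_right_mono[of 1 "S b" "S b"]])
    have "\<beta> + s \<le> \<mu> * b" unfolding b_def using assms by (simp add: field_simps)
    hence "(\<beta> + s) * (S b)\<^sup>2 \<le> \<mu> * b * (S b)\<^sup>2" by (intro mult_right_mono) auto
    moreover have "\<beta> * S b \<le> \<beta> * (S b)\<^sup>2" "s \<le> s * (S b)\<^sup>2"
      using assms sq by (auto intro: mult_left_mono)
    ultimately show ?thesis unfolding f_def by (simp add: algebra_simps)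
  qed
  then obtain z where "0 \<le> z" "f z = 0"
    using IVT'[of f 0 0 b] \<open>f 0 \<le> 0\<close> \<open>0 \<le> b\<close> \<open>continuous_on {0..b} f\<close> by auto
  hence cubic: "\<mu> * z * (S z)\<^sup>2 = \<beta> * S z + s" by (simp add: f_def)
  have "0 < S z"
    using cubic Ssum_nonneg[of n \<nu> z] assms by (cases "S z = 0") (auto simp: S_def)
  moreover have "0 < z"
  proof (rule ccontr)
    assume "\<not> 0 < z"
    hence "\<mu> * z * (S z)\<^sup>2 \<le> 0" using assms by (simp add: mult_nonneg_nonpos mult_nonpos_nonneg)
    thus False using cubic \<open>0 < S z\<close> assms by (smt (verit) mult_pos_pos)
  qed
  moreover have "\<mu> * z = \<beta> / S z + s / (S z)\<^sup>2"
    using cubic \<open>0 < S z\<close> by (simp add: field_simps power2_eq_square)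
  ultimately show ?thesis unfolding stationary_def S_def by blast
qed

text \<open>\<open>\<mu> z\<close> increases strictly while \<open>U'(Ssum z)\<close> does not increase, so any point where
the former dominates lies at or above the stationary point.\<close>
lemma stationary_le_of_stationary:
  assumes "0 < \<mu>" "0 < \<beta>" "0 < s"
    and "0 < z'" "0 < Ssum n \<nu> z'" "\<beta> / Ssum n \<nu> z' + s / (Ssum n \<nu> z')\<^sup>2 \<le> \<mu> * z'"
    and "stationary \<beta> s \<mu> n \<nu> z"
  shows "z \<le> z'"
proof (rule ccontr)
  assume "\<not> z \<le> z'"
  hence "\<beta> / Ssum n \<nu> z + s / (Ssum n \<nu> z)\<^sup>2 \<le> \<beta> / Ssum n \<nu> z' + s / (Ssum n \<nu> z')\<^sup>2"
    using assms by (intro marginal_antimono Ssum_mono) auto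
  moreover have "\<mu> * z' < \<mu> * z" using \<open>\<not> z \<le> z'\<close> assms(1) by simp
  ultimately show False using assms unfolding stationary_def by linarith
qed

lemma stationary_unique:
  assumes "0 < \<mu>" "0 < \<beta>" "0 < s" "stationary \<beta> s \<mu> n \<nu> z" "stationary \<beta> s \<mu> n \<nu> z'"
  shows "z' = z"
  using stationary_le_of_stationary[OF assms(1-3) _ _ _ assms(4)]
    stationary_le_of_stationary[OF assms(1-3) _ _ _ assms(5)] assms(4,5)
  unfolding stationary_def by (metis order_antisym order_refl)

lemma largest_cubic_root_of_pos_sum:
  fixes \<mu> \<beta> s z :: real and m :: nat
  assumes "1 \<le> m" "0 < \<mu>" "0 < \<beta>" "0 < s"
    and cz: "cubic_root \<beta> s \<mu> \<nu> m z" and pos: "0 < (\<Sum>i=1..m. \<nu> i + z)"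
  shows "largest_cubic_root \<beta> s \<mu> \<nu> m z"
  unfolding largest_cubic_root_def
proof (intro conjI cz allI impI)
  fix w assume cw: "cubic_root \<beta> s \<mu> \<nu> m w"
  show "w \<le> z"
  proof (rule ccontr)
    assume "\<not> w \<le> z"
    define a where "a = (\<Sum>i=1..m. \<nu> i + z)"
    define b where "b = (\<Sum>i=1..m. \<nu> i + w)"
    have "b - a = real m * (w - z)"
      unfolding a_def b_def by (simp add: sum.distrib sum_subtractf algebra_simps)
    moreover have "0 < real m * (w - z)" using assms \<open>\<not> w \<le> z\<close> by simp
    ultimately have "a < b" by simp
    have "0 < a" using pos a_def by simp
    have ca: "\<mu> * z * a\<^sup>2 = \<beta> * a + s" using cz unfolding cubic_root_def a_def by simp
    have cb: "\<mu> * w * b\<^sup>2 = \<beta> * b + s" using cw unfolding cubic_root_def b_def by simp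
    have "0 < z" using ca \<open>0 < a\<close> assms
      by (smt (verit) mult_pos_pos zero_less_mult_iff zero_less_power)
    have "\<mu> * z * a = \<beta> + s / a"
      using ca \<open>0 < a\<close> by (simp add: field_simps power2_eq_square)
    hence "\<beta> < \<mu> * z * (a + b)"
      using assms \<open>0 < a\<close> \<open>0 < z\<close> \<open>a < b\<close>
      by (smt (verit) distrib_left divide_pos_pos mult_pos_pos)
    hence "0 < (b - a) * (\<mu> * z * (a + b) - \<beta>)" using \<open>a < b\<close> by simp
    also have "\<dots> = \<mu> * z * b\<^sup>2 - \<beta> * b - s"
      using ca by (simp add: power2_eq_square algebra_simps)
    also have "\<dots> < \<mu> * w * b\<^sup>2 - \<beta> * b - s"
      using \<open>\<not> w \<le> z\<close> assms \<open>a < b\<close> \<open>0 < a\<close> by simp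
    finally show False using cb by simp
  qed
qed

lemma largest_cubic_root_of_stationary:
  assumes "1 \<le> m" "0 < \<mu>" "0 < \<beta>" "0 < s" and st: "stationary \<beta> s \<mu> n \<nu> z"
    and prefix: "Ssum n \<nu> z = (\<Sum>i=1..m. \<nu> i + z)"
  shows "largest_cubic_root \<beta> s \<mu> \<nu> m z"
proof (rule largest_cubic_root_of_pos_sum[OF assms(1-4)])
  show "cubic_root \<beta> s \<mu> \<nu> m z"
    using st prefix unfolding cubic_root_def stationary_def
    by (simp add: field_simps power2_eq_square)
  show "0 < (\<Sum>i=1..m. \<nu> i + z)" using st prefix unfolding stationary_def by simp
qed

lemma Ssum_eq_sum_prefix:
  assumes "m \<le> n" "\<forall>i\<in>{1..m}. 0 \<le> \<nu> i + z" "\<forall>i\<in>{m<..n}. \<nu> i + z \<le> 0"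
  shows "Ssum n \<nu> z = (\<Sum>i=1..m. \<nu> i + z)"
proof -
  have "Ssum n \<nu> z = (\<Sum>i=1..m. max 0 (\<nu> i + z))"
    unfolding Ssum_def using assms by (intro sum.mono_neutral_right) auto
  also have "\<dots> = (\<Sum>i=1..m. \<nu> i + z)" using assms by (intro sum.cong) auto
  finally show ?thesis .
qed

lemma stationary_le_of_idx_cond:
  assumes "0 < \<mu>" "0 < \<beta>" "0 < s" "stationary \<beta> s \<mu> n \<nu> z" "idx_cond \<beta> s \<mu> n \<nu> i"
  shows "z \<le> - \<nu> i"
proof (rule stationary_le_of_stationary[OF assms(1-3) _ _ _ assms(4)])
  have ic: "0 < - \<nu> i" "dU \<beta> s (Ssum n \<nu> (- \<nu> i)) \<le> ereal (\<mu> * (- \<nu> i))"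
    using assms(5) unfolding idx_cond_def by auto
  moreover have "Ssum n \<nu> (- \<nu> i) \<noteq> 0" using ic(2) unfolding dU_def by auto
  ultimately show "0 < - \<nu> i" "0 < Ssum n \<nu> (- \<nu> i)"
    and "\<beta> / Ssum n \<nu> (- \<nu> i) + s / (Ssum n \<nu> (- \<nu> i))\<^sup>2 \<le> \<mu> * (- \<nu> i)"
    using Ssum_nonneg[of n \<nu> "- \<nu> i"] dU_pos by auto
qed

lemma inactive_idx_cond:
  assumes "0 < \<mu>" "0 < \<beta>" "0 < s" and st: "stationary \<beta> s \<mu> n \<nu> z"
    and sorted: "\<forall>i j. 1 \<le> i \<and> i \<le> j \<and> j \<le> n \<longrightarrow> \<nu> j \<le> \<nu> i"
    and i: "i \<in> {1..n}" "\<nu> i + z < 0"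
  shows "i \<in> {2..n} \<and> idx_cond \<beta> s \<mu> n \<nu> i"
proof
  have z: "0 < z" "0 < Ssum n \<nu> z" "\<mu> * z = \<beta> / Ssum n \<nu> z + s / (Ssum n \<nu> z)\<^sup>2"
    using st unfolding stationary_def by auto
  show "i \<in> {2..n}"
  proof (rule ccontr)
    assume "i \<notin> {2..n}"
    with i have "i = 1" by auto
    have "\<nu> j + z < 0" if "j \<in> {1..n}" for j
      using sorted[rule_format, of 1 j] that i \<open>i = 1\<close> by auto
    hence "Ssum n \<nu> z = 0" unfolding Ssum_def by (intro sum.neutral) auto
    thus False using z by simp
  qed
  have "0 < Ssum n \<nu> (- \<nu> i)" using i z Ssum_mono[of z "- \<nu> i" n \<nu>] by linarith
  have "\<beta> / Ssum n \<nu> (- \<nu> i) + s / (Ssum n \<nu> (- \<nu> i))\<^sup>2 \<le> \<beta> / Ssum n \<nu> z + s / (Ssum n \<nu> z)\<^sup>2"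
    using assms z i by (intro marginal_antimono Ssum_mono) auto
  also have "\<dots> \<le> \<mu> * (- \<nu> i)" unfolding z(3)[symmetric]
    using i assms(1) by (intro mult_left_mono) auto
  finally show "idx_cond \<beta> s \<mu> n \<nu> i"
    unfolding idx_cond_def dU_pos[OF \<open>0 < Ssum n \<nu> (- \<nu> i)\<close>] using i z(1) by simp
qed

lemma stationary_cubic:
  assumes "1 \<le> n" "0 < \<mu>" "0 < \<beta>" "0 < s" and st: "stationary \<beta> s \<mu> n \<nu> z"
    and sorted: "\<forall>i j. 1 \<le> i \<and> i \<le> j \<and> j \<le> n \<longrightarrow> \<nu> j \<le> \<nu> i"
  shows "((\<exists>i\<in>{2..n}. idx_cond \<beta> s \<mu> n \<nu> i) \<longrightarrow>
            largest_cubic_root \<beta> s \<mu> \<nu> ((LEAST i. i \<in> {2..n} \<and> idx_cond \<beta> s \<mu> n \<nu> i) - 1) z) \<and>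
         (\<not> (\<exists>i\<in>{2..n}. idx_cond \<beta> s \<mu> n \<nu> i) \<longrightarrow> largest_cubic_root \<beta> s \<mu> \<nu> n z)"
proof (intro conjI impI)
  note inactive = inactive_idx_cond[OF assms(2-4) st sorted]
  assume "\<exists>i\<in>{2..n}. idx_cond \<beta> s \<mu> n \<nu> i"
  then obtain k where "k \<in> {2..n} \<and> idx_cond \<beta> s \<mu> n \<nu> k" by blast
  define m where "m = (LEAST i. i \<in> {2..n} \<and> idx_cond \<beta> s \<mu> n \<nu> i)"
  have m: "m \<in> {2..n}" "idx_cond \<beta> s \<mu> n \<nu> m"
    using LeastI[of "\<lambda>i. i \<in> {2..n} \<and> idx_cond \<beta> s \<mu> n \<nu> i", OF \<open>k \<in> _ \<and> _\<close>]
    unfolding m_def by auto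
  have "z \<le> - \<nu> m" using stationary_le_of_idx_cond[OF assms(2-4) st m(2)] .
  have "0 \<le> \<nu> i + z" if i: "i \<in> {1..m - 1}" for i
  proof (rule ccontr)
    assume "\<not> 0 \<le> \<nu> i + z"
    moreover have "i \<in> {1..n}" using i m(1) by auto
    ultimately have "i \<in> {2..n} \<and> idx_cond \<beta> s \<mu> n \<nu> i" using inactive by simp
    hence "m \<le> i" unfolding m_def by (rule Least_le)
    thus False using i m(1) by auto
  qed
  moreover have "\<nu> i + z \<le> 0" if i: "i \<in> {m - 1<..n}" for i
  proof -
    have "m \<le> i" using i m(1) by auto
    hence "\<nu> i \<le> \<nu> m" using sorted i m(1) by auto
    thus ?thesis using \<open>z \<le> - \<nu> m\<close> by simp
  qed
  ultimately have "Ssum n \<nu> z = (\<Sum>i=1..m - 1. \<nu> i + z)"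
    using m(1) by (intro Ssum_eq_sum_prefix) auto
  moreover have "1 \<le> m - 1" using m(1) by auto
  ultimately show "largest_cubic_root \<beta> s \<mu> \<nu> ((LEAST i. i \<in> {2..n} \<and> idx_cond \<beta> s \<mu> n \<nu> i) - 1) z"
    using largest_cubic_root_of_stationary[OF _ assms(2-4) st] unfolding m_def by blast
next
  assume none: "\<not> (\<exists>i\<in>{2..n}. idx_cond \<beta> s \<mu> n \<nu> i)"
  have "0 \<le> \<nu> i + z" if "i \<in> {1..n}" for i
    using inactive_idx_cond[OF assms(2-4) st sorted that] none by (meson not_le)
  hence "Ssum n \<nu> z = (\<Sum>i=1..n. \<nu> i + z)" by (intro Ssum_eq_sum_prefix) auto
  thus "largest_cubic_root \<beta> s \<mu> \<nu> n z"
    using largest_cubic_root_of_stationary[OF assms(1-4) st] by simp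
qed

theorem lemma1:
  fixes n :: nat and \<mu> \<beta> s :: real and \<nu> :: "nat \<Rightarrow> real"
  assumes "n \<ge> 1" and "\<mu> > 0" and "\<beta> > 0" and "s > 0"
  shows "\<exists>\<zeta>.
     (\<zeta> > 0 \<and> Ssum n \<nu> \<zeta> > 0 \<and> ereal (\<mu> * \<zeta>) = dU \<beta> s (Ssum n \<nu> \<zeta>)) \<and>
     (\<forall>\<zeta>'. \<zeta>' > 0 \<and> Ssum n \<nu> \<zeta>' > 0 \<and> ereal (\<mu> * \<zeta>') = dU \<beta> s (Ssum n \<nu> \<zeta>') \<longrightarrow> \<zeta>' = \<zeta>) \<and>
     (\<forall>x. is_minimizer \<beta> s \<mu> n \<nu> x \<longleftrightarrow>
          x = (\<lambda>i. if i \<in> {1..n} then max 0 (\<nu> i + \<zeta>) else 0)) \<and>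
     ((\<forall>i j. 1 \<le> i \<and> i \<le> j \<and> j \<le> n \<longrightarrow> \<nu> j \<le> \<nu> i) \<longrightarrow>
        ((\<exists>i\<in>{2..n}. idx_cond \<beta> s \<mu> n \<nu> i) \<longrightarrow>
            largest_cubic_root \<beta> s \<mu> \<nu> ((LEAST i. i \<in> {2..n} \<and> idx_cond \<beta> s \<mu> n \<nu> i) - 1) \<zeta>) \<and>
        (\<not> (\<exists>i\<in>{2..n}. idx_cond \<beta> s \<mu> n \<nu> i) \<longrightarrow>
            largest_cubic_root \<beta> s \<mu> \<nu> n \<zeta>))"
proof -
  obtain z where st: "stationary \<beta> s \<mu> n \<nu> z" using stationary_exists assms by blast
  show ?thesis
  proof (intro exI conjI allI impI)
    show "0 < z" "0 < Ssum n \<nu> z" "ereal (\<mu> * z) = dU \<beta> s (Ssum n \<nu> z)"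
      using st unfolding stationary_iff_dU by auto
    show "z' = z" if "0 < z' \<and> 0 < Ssum n \<nu> z' \<and> ereal (\<mu> * z') = dU \<beta> s (Ssum n \<nu> z')" for z'
      using stationary_unique[OF assms(2-4) st] that unfolding stationary_iff_dU by blast
    show "is_minimizer \<beta> s \<mu> n \<nu> x \<longleftrightarrow> x = (\<lambda>i. if i \<in> {1..n} then max 0 (\<nu> i + z) else 0)" for x
      using is_minimizer_iff_waterfill[OF assms(2-4) st] unfolding waterfill_def .
  qed (use stationary_cubic[OF assms st] in blast)+
qed

end
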